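(* Let $\sigma\in\Sigma$ satisfy, for all contests $c\in\mathcal{C}$, candidates $i\in\mathcal{N}_c$ and integers $n\in\mathbb{N}$: $\sigma^n(i)\in\mathcal{N}_c$ if and only if $\sigma^n(i)=i$. Then there exist $B\in\mathbb{N}$ and a deck $\beta_1,\ldots,\beta_B\in\mathscr{B}$ such that $T^*_i(\beta_1,\ldots,\beta_B)\ge1$ for all $i\in\mathcal{N}$; $T^*_i(\beta_1,\ldots,\beta_B)\neq T^*_j(\beta_1,\ldots,\beta_B)$ for all $c\in\mathcal{C}$ and distinct $i,j\in\mathcal{N}_c$; and $T^\sigma(\beta_1,\ldots,\beta_B)=T^*(\beta_1,\ldots,\beta_B)$.
   Context: A ballot style consists of contests $\mathcal{C}=\{1,\ldots,C\}$, candidates $\mathcal{N}=\{1,\ldots,N\}$ partitioned into nonempty sets $\mathcal{N}_c$ ($c\in\mathcal{C}$), and positive integers $v_c$. A filled-out ballot is a subset $\beta\subseteq\mathcal{N}$; $\mathscr{B}=\{\beta\subseteq\mathcal{N}: |\mathcal{N}_c\cap\beta|\le v_c\ \forall c\}$. For $i\in\mathcal{N}_c$: $T^*_i(\beta_1,\ldots,\beta_B)=\sum_{b=1}^B\mathbb{I}\{i\in\beta_b\text{ and }|\mathcal{N}_c\cap\beta_b|\le v_c\}$, and for a bijection $\sigma$ of $\mathcal{N}$, $T^\sigma_i(\beta_1,\ldots,\beta_B)=\sum_{b=1}^B\mathbb{I}\{\sigma(i)\in\beta_b\text{ and }|\{\sigma(j)\in\beta_b: j\in\mathcal{N}_c\}|\le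 v_c\}$. $\Sigma$ is the set of non-identity bijections $\mathcal{N}\to\mathcal{N}$. $\sigma^n$ denotes the $n$-fold composition of $\sigma$. *)

theory Defs
  imports Main
begin

text \<open>Ballot style: candidates {1..N}, contests {1..C}, Ncs c is the candidate set of
contest c, v c the number of allowed votes. A deck is a list of ballots (sets of candidates).\<close>

definition ballot_style :: "nat \<Rightarrow> nat \<Rightarrow> (nat \<Rightarrow> nat set) \<Rightarrow> (nat \<Rightarrow> nat) \<Rightarrow> bool" where
  "ballot_style C N Ncs v \<longleftrightarrow>
     (\<forall>c\<in>{1..C}. Ncs c \<noteq> {} \<and> v c > 0) \<and>
     (\<forall>c\<in>{1..C}. \<forall>d\<in>{1..C}. c \<noteq> d \<longrightarrow> Ncs c \<inter> Ncs d = {}) \<and>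
     (\<Union>c\<in>{1..C}. Ncs c) = {1..N}"

definition valid_ballots :: "nat \<Rightarrow> nat \<Rightarrow> (nat \<Rightarrow> nat set) \<Rightarrow> (nat \<Rightarrow> nat) \<Rightarrow> nat set set" where
  "valid_ballots C N Ncs v = {\<beta>. \<beta> \<subseteq> {1..N} \<and> (\<forall>c\<in>{1..C}. card (Ncs c \<inter> \<beta>) \<le> v c)}"

definition Tstar :: "(nat \<Rightarrow> nat set) \<Rightarrow> (nat \<Rightarrow> nat) \<Rightarrow> nat \<Rightarrow> nat \<Rightarrow> nat set list \<Rightarrow> nat" where
  "Tstar Ncs v c i bs =
     (\<Sum>b\<leftarrow>bs. if i \<in> b \<and> card (Ncs c \<inter> b) \<le> v c then 1 else 0)"

definition Tsigma :: "(nat \<Rightarrow> nat) \<Rightarrow> (nat \<Rightarrow> nat set) \<Rightarrow> (nat \<Rightarrow> nat) \<Rightarrow> nat \<Rightarrow> nat \<Rightarrow> nat set list \<Rightarrow> nat" where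
  "Tsigma \<sigma> Ncs v c i bs =
     (\<Sum>b\<leftarrow>bs. if \<sigma> i \<in> b \<and> card {\<sigma> j | j. j \<in> Ncs c \<and> \<sigma> j \<in> b} \<le> v c then 1 else 0)"

end

theory Submission
  imports Defs "HOL-Combinatorics.Orbits"
begin

text \<open>A deck of singleton ballots never overvotes, so on it every tally simply counts the
copies of each singleton, and a relabelling by \<open>\<sigma>\<close> replaces the tally of \<open>i\<close> by that of
\<open>\<sigma> i\<close>. It therefore suffices to give candidate \<open>k\<close> a number of copies that is positive,
constant on the cycles of \<open>\<sigma>\<close> and injective on each contest; the least element of the cycle
through \<open>k\<close> does this, because by hypothesis no cycle meets a contest twice.\<close>

lemma bij_betw_self_in_orbit:
  assumes "bij_betw f S S" "finite S" "x \<in> S"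
  shows "x \<in> orbit f x" and "orbit f x \<subseteq> S"
proof -
  define p where "p y = (if y \<in> S then f y else y)" for y
  have "bij_betw p S S \<longleftrightarrow> bij_betw f S S"
    by (rule bij_betw_cong) (simp add: p_def)
  then have perm: "p permutes S"
    using assms(1) bij_imp_permutes[of p S] unfolding p_def by auto
  have "orbit p x = orbit f x"
    using bij_betwE[OF assms(1)] by (intro orbit_cong0[OF assms(3)]) (auto simp: p_def)
  then show "x \<in> orbit f x" "orbit f x \<subseteq> S"
    using permutation_self_in_orbit[OF permutes_imp_permutation[OF assms(2) perm]]
      permutes_orbit_subset[OF perm assms(3)] by metis+
qed

lemma Min_orbit_eq_imp_funpow:
  assumes "i \<in> orbit f i" "j \<in> orbit f j" "Min (orbit f i) = Min (orbit f j)"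
  shows "\<exists>n. j = (f ^^ n) i"
proof -
  let ?m = "Min (orbit f i)"
  have "?m \<in> orbit f i" "?m \<in> orbit f j"
    using assms finite_orbit orbit_nonempty by (metis Min_in)+
  then have "j \<in> orbit f i"
    using assms(2) by (blast intro: orbit_swap orbit_trans)
  then show ?thesis
    using orbit_altdef_self_in[OF assms(1)] by blast
qed

lemma Min_orbit_in:
  assumes "bij_betw f S S" "finite S" "x \<in> S"
  shows "Min (orbit f x) \<in> S"
  using bij_betw_self_in_orbit[OF assms] Min_in[OF finite_orbit orbit_nonempty] by blast

lemma Min_orbit_apply:
  assumes "bij_betw f S S" "finite S" "x \<in> S"
  shows "Min (orbit f (f x)) = Min (orbit f x)"
  using self_in_orbit_step[OF bij_betw_self_in_orbit(1)[OF assms]] by simp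

lemma inj_on_Min_orbit:
  assumes "bij_betw f S S" "finite S" "A \<subseteq> S"
    and "\<forall>i\<in>A. \<forall>n. (f ^^ n) i \<in> A \<longleftrightarrow> (f ^^ n) i = i"
  shows "inj_on (\<lambda>x. Min (orbit f x)) A"
proof (rule inj_onI)
  fix i j assume ij: "i \<in> A" "j \<in> A" "Min (orbit f i) = Min (orbit f j)"
  then obtain n where "j = (f ^^ n) i"
    using Min_orbit_eq_imp_funpow bij_betw_self_in_orbit(1)[OF assms(1,2)] assms(3) by blast
  then show "i = j"
    using assms(4) ij by metis
qed

definition singleton_deck :: "(nat \<Rightarrow> nat) \<Rightarrow> nat \<Rightarrow> nat set list" where
  "singleton_deck g N = concat (map (\<lambda>k. replicate (g k) {k}) [1..<N+1])"

lemma count_singleton_deck: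
  assumes "\<And>k. P {k} \<longleftrightarrow> k = x" "x \<in> {1..N}"
  shows "(\<Sum>b\<leftarrow>singleton_deck g N. if P b then 1 else 0) = g x"
proof -
  have "(\<Sum>b\<leftarrow>concat (map (\<lambda>k. replicate (g k) {k}) ks). if P b then 1 else 0)
        = (\<Sum>k\<leftarrow>ks. if k = x then g k else 0)" for ks
    using assms(1) by (induction ks) (simp_all add: sum_list_replicate)
  then have "(\<Sum>b\<leftarrow>singleton_deck g N. if P b then 1 else 0)
             = (\<Sum>k\<leftarrow>[1..<N+1]. if k = x then g k else 0)"
    unfolding singleton_deck_def .
  also have "\<dots> = g x"
    using assms(2) by (simp add: sum_list_distinct_conv_sum_set atLeastLessThanSuc_atLeastAtMost)
  finally show ?thesis .
qed

lemma card_le_v_singleton: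
  assumes "A \<subseteq> {k}" "0 < v"
  shows "card A \<le> v"
  using card_mono[OF _ assms(1)] assms(2) by simp

lemma Tstar_singleton_deck:
  assumes "0 < v c" "i \<in> {1..N}"
  shows "Tstar Ncs v c i (singleton_deck g N) = g i"
  unfolding Tstar_def using assms(1)
  by (intro count_singleton_deck[OF _ assms(2)]) (auto intro: card_le_v_singleton)

lemma Tsigma_singleton_deck:
  assumes "0 < v c" "\<sigma> i \<in> {1..N}"
  shows "Tsigma \<sigma> Ncs v c i (singleton_deck g N) = g (\<sigma> i)"
  unfolding Tsigma_def using assms(1)
  by (intro count_singleton_deck[OF _ assms(2)]) (auto intro: card_le_v_singleton)

lemma singleton_deck_valid:
  assumes "\<forall>c\<in>{1..C}. 0 < v c"
  shows "set (singleton_deck g N) \<subseteq> valid_ballots C N Ncs v"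
  using assms by (auto simp: singleton_deck_def valid_ballots_def intro: card_le_v_singleton)

theorem theorem4:
  fixes C N :: nat and Ncs :: "nat \<Rightarrow> nat set" and v :: "nat \<Rightarrow> nat" and \<sigma> :: "nat \<Rightarrow> nat"
  assumes style: "ballot_style C N Ncs v"
    and bij: "bij_betw \<sigma> {1..N} {1..N}"
    and nonid: "\<exists>i\<in>{1..N}. \<sigma> i \<noteq> i"
    and cond: "\<forall>c\<in>{1..C}. \<forall>i\<in>Ncs c. \<forall>n::nat. (\<sigma> ^^ n) i \<in> Ncs c \<longleftrightarrow> (\<sigma> ^^ n) i = i"
  shows "\<exists>bs :: nat set list.
           set bs \<subseteq> valid_ballots C N Ncs v \<and>
           (\<forall>c\<in>{1..C}. \<forall>i\<in>Ncs c. Tstar Ncs v c i bs \<ge> 1) \<and>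
           (\<forall>c\<in>{1..C}. \<forall>i\<in>Ncs c. \<forall>j\<in>Ncs c. i \<noteq> j \<longrightarrow> Tstar Ncs v c i bs \<noteq> Tstar Ncs v c j bs) \<and>
           (\<forall>c\<in>{1..C}. \<forall>i\<in>Ncs c. Tsigma \<sigma> Ncs v c i bs = Tstar Ncs v c i bs)"
proof -
  have v_pos: "\<forall>c\<in>{1..C}. 0 < v c" and Ncs_sub: "\<And>c. c \<in> {1..C} \<Longrightarrow> Ncs c \<subseteq> {1..N}"
    using style unfolding ballot_style_def by blast+
  define g where "g k = Min (orbit \<sigma> k)" for k
  have tallies: "Tstar Ncs v c i (singleton_deck g N) = g i"
    "Tsigma \<sigma> Ncs v c i (singleton_deck g N) = g i" if "c \<in> {1..C}" "i \<in> Ncs c" for c i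
  proof -
    have i: "i \<in> {1..N}" and v: "0 < v c"
      using that Ncs_sub v_pos by blast+
    show "Tstar Ncs v c i (singleton_deck g N) = g i"
      using v i by (rule Tstar_singleton_deck)
    show "Tsigma \<sigma> Ncs v c i (singleton_deck g N) = g i"
      using v bij_betw_apply[OF bij i] Min_orbit_apply[OF bij _ i]
      by (simp add: Tsigma_singleton_deck g_def)
  qed
  have "g i \<in> {1..N}" "inj_on g (Ncs c)" if "c \<in> {1..C}" "i \<in> Ncs c" for c i
    using Min_orbit_in[OF bij] inj_on_Min_orbit[OF bij _ Ncs_sub] cond that Ncs_sub
    unfolding g_def by (blast, simp)
  then show ?thesis
    using singleton_deck_valid[OF v_pos] tallies
    by (intro exI[of _ "singleton_deck g N"]) (auto simp: inj_on_def)
qed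

end
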